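(* Assume the setting and the nsCRAIG recurrence described in the context, and let $k\ge1$ be such that $q_1,\dots,q_k$, $v_j,t_j,r_j,\alpha_j$ ($j\le k$), $\beta_2,\dots,\beta_k$ and $g_k$ are defined. With $V_k=[v_1,\dots,v_k]$, $T_k=[t_1,\dots,t_k]$, $D_k=[r_1/\alpha_1,\dots,r_k/\alpha_k]$ and $L_k=V_k^TMV_k+D_k^TT_k$, one has $Q_k=D_kB_k$, $AQ_k=MV_kB_k$, $CQ_k=T_kB_k$, $Q_k^TNQ_k=I_k$, $A^TV_k+T_k=NQ_kH_k+Ng_ke_k^T$, and $H_k=B_k^TL_k^T$ where $L_k$ is unit lower triangular. Consequently, with $S=A^TM^{-1}A+C$, $N^{-1}SQ_k=Q_k(H_kB_k)+\alpha_kg_ke_k^T$, i.e. the recurrence implicitly performs the Arnoldi reduction of the preconditioned Schur complement to upper Hessenberg form $H_kB_k$.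
   Context: Setting: $M\in\mathbb{R}^{m\times m}$ is nonsymmetric and positive definite ($x^TMx>0$ for all $x\ne0$); $A\in\mathbb{R}^{m\times n}$ ($n\le m$) has full column rank; $C\in\mathbb{R}^{n\times n}$ is symmetric positive semidefinite; $b\in\mathbb{R}^n$ is nonzero; $N\in\mathbb{R}^{n\times n}$ is symmetric positive definite. Write $\|x\|_G=(x^TGx)^{1/2}$ for $G$ positive definite (for nonsymmetric $M$ this is the norm of its symmetric part). The generalized saddle point system is $Mu+Ap=0$, $A^Tu-Cp=b$, with unique solution $(u_*,p_* )$; $S=A^TM^{-1}A+C$. nsCRAIG recurrence (exact arithmetic): Initialization: $\beta_1=\|b\|_{N^{-1}}$, $q_1=N^{-1}b/\beta_1$, $Q_1=[q_1]$, $r_1=q_1$, $w_1=M^{-1}Aq_1$, $s_1=Cr_1$, $\alpha_1=(w_1^TMw_1+r_1^Ts_1)^{1/2}$, $v_1=w_1/\alpha_1$, $t_1=s_1/\alpha_1$, $\chi_1=\beta_1/\alpha_1$. For $k=1,2,\dots$: $\hat g_k=N^{-1}(A^Tv_k+t_k)$, $h_k=Q_k^TN\hat g_k\in\mathbb{R}^k$, $g_k=\hat g_k-Q_kh_k$, $\beta_{k+1}=\|g_k\|_N$; if $\beta_{k+1}=0$ the recurrence stops; otherwise $q_{k+1}=g_k/\beta_{k+1}$, $Q_{k+1}=[Q_k,q_{k+1}]$, $w_{k+1}=M^{-1}Aq_{k+1}-\beta_{k+1}v_k$, $r_{k+1}=q_{k+1}-(\beta_{k+1}/\alpha_k)r_k$,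 $s_{k+1}=Cr_{k+1}$, $\alpha_{k+1}=(w_{k+1}^TMw_{k+1}+r_{k+1}^Ts_{k+1})^{1/2}$, $v_{k+1}=w_{k+1}/\alpha_{k+1}$, $t_{k+1}=s_{k+1}/\alpha_{k+1}$, $\chi_{k+1}=-(\beta_{k+1}/\alpha_{k+1})\chi_k$. Matrices: $B_k\in\mathbb{R}^{k\times k}$ upper bidiagonal with $(B_k)_{ii}=\alpha_i$, $(B_k)_{i,i+1}=\beta_{i+1}$; $H_k\in\mathbb{R}^{k\times k}$ upper Hessenberg whose $j$-th column has entries $(H_k)_{ij}=(h_j)_i$ for $i\le j$, $(H_k)_{j+1,j}=\beta_{j+1}$ (if $j<k$), and zeros otherwise. The nsCRAIG iterates at step $k$ are $y_k=-B_k^{-1}H_k^{-1}(\beta_1e_1)$, $p^{(k)}=Q_ky_k$, $u^{(k)}=-M^{-1}Ap^{(k)}$, with $e_1$ the first unit vector of $\mathbb{R}^k$; $e_k$ denotes the $k$-th unit vector of $\mathbb{R}^k$. *)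

theory Defs
  imports "Jordan_Normal_Form.Gauss_Jordan_Elimination" "Jordan_Normal_Form.DL_Rank"
begin

text \<open>Matrices and vectors are Jordan_Normal_Form matrices/vectors over real.
  Sequence indices (q j, v j, alpha j, ...) are 1-based as in the paper; matrix
  entries are 0-based as in the library.\<close>

definition minv :: "real mat \<Rightarrow> real mat" where
  "minv X = the (mat_inverse X)"

definition Gnorm :: "real mat \<Rightarrow> real vec \<Rightarrow> real" where
  "Gnorm G x = sqrt (x \<bullet> (G *\<^sub>v x))"

definition pos_def :: "nat \<Rightarrow> real mat \<Rightarrow> bool" where
  "pos_def d X \<longleftrightarrow> X \<in> carrier_mat d d \<and>
     (\<forall>x \<in> carrier_vec d. x \<noteq> 0\<^sub>v d \<longrightarrow> x \<bullet> (X *\<^sub>v x) > 0)"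

definition pos_semidef :: "nat \<Rightarrow> real mat \<Rightarrow> bool" where
  "pos_semidef d X \<longleftrightarrow> X \<in> carrier_mat d d \<and>
     (\<forall>x \<in> carrier_vec d. x \<bullet> (X *\<^sub>v x) \<ge> 0)"

definition colsmat :: "nat \<Rightarrow> (nat \<Rightarrow> real vec) \<Rightarrow> nat \<Rightarrow> real mat" where
  "colsmat d x k = mat_of_cols d (map x [1..<k+1])"

text \<open>B_k: upper bidiagonal, (B)_ii = alpha_i, (B)_{i,i+1} = beta_{i+1} (1-based).\<close>
definition Bmat :: "(nat \<Rightarrow> real) \<Rightarrow> (nat \<Rightarrow> real) \<Rightarrow> nat \<Rightarrow> real mat" where
  "Bmat \<alpha> \<beta> k = mat k k (\<lambda>(i,j). if i = j then \<alpha> (i+1)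
                                   else if j = i+1 then \<beta> (j+1) else 0)"

text \<open>H_k: upper Hessenberg, column j has h_j on and above the diagonal and
  beta_{j+1} on the subdiagonal (1-based).\<close>
definition Hmat :: "(nat \<Rightarrow> real vec) \<Rightarrow> (nat \<Rightarrow> real) \<Rightarrow> nat \<Rightarrow> real mat" where
  "Hmat h \<beta> k = mat k k (\<lambda>(i,j). if i \<le> j then h (j+1) $ i
                                  else if i = j+1 then \<beta> (j+2) else 0)"

definition unit_lower_triangular :: "nat \<Rightarrow> real mat \<Rightarrow> bool" where
  "unit_lower_triangular d L \<longleftrightarrow> L \<in> carrier_mat d d \<and>
     (\<forall>i<d. L $$ (i,i) = 1) \<and> (\<forall>i j. i < j \<and> j < d \<longrightarrow> L $$ (i,j) = 0)"

definition nsCRAIG_upto ::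
  "nat \<Rightarrow> nat \<Rightarrow> real mat \<Rightarrow> real mat \<Rightarrow> real mat \<Rightarrow> real mat \<Rightarrow> real vec \<Rightarrow> nat \<Rightarrow>
   (nat \<Rightarrow> real vec) \<Rightarrow> (nat \<Rightarrow> real vec) \<Rightarrow> (nat \<Rightarrow> real vec) \<Rightarrow> (nat \<Rightarrow> real vec) \<Rightarrow>
   (nat \<Rightarrow> real) \<Rightarrow> (nat \<Rightarrow> real vec) \<Rightarrow> (nat \<Rightarrow> real vec) \<Rightarrow>
   (nat \<Rightarrow> real vec) \<Rightarrow> (nat \<Rightarrow> real vec) \<Rightarrow> (nat \<Rightarrow> real) \<Rightarrow> bool" where
  "nsCRAIG_upto m n M A C N b k q w r s \<alpha> v t h g \<beta> \<longleftrightarrow>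
     \<beta> 1 = Gnorm (minv N) b \<and>
     q 1 = (1 / \<beta> 1) \<cdot>\<^sub>v (minv N *\<^sub>v b) \<and>
     r 1 = q 1 \<and>
     w 1 = minv M *\<^sub>v (A *\<^sub>v q 1) \<and>
     (\<forall>j. 1 \<le> j \<and> j \<le> k \<longrightarrow>
        s j = C *\<^sub>v r j \<and>
        \<alpha> j = sqrt (w j \<bullet> (M *\<^sub>v w j) + r j \<bullet> s j) \<and>
        \<alpha> j \<noteq> 0 \<and>
        v j = (1 / \<alpha> j) \<cdot>\<^sub>v w j \<and>
        t j = (1 / \<alpha> j) \<cdot>\<^sub>v s j \<and>
        h j = (colsmat n q j)\<^sup>T *\<^sub>v (N *\<^sub>v (minv N *\<^sub>v (A\<^sup>T *\<^sub>v v j + t j))) \<and>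
        g j = minv N *\<^sub>v (A\<^sup>T *\<^sub>v v j + t j) - colsmat n q j *\<^sub>v h j) \<and>
     (\<forall>j. 1 \<le> j \<and> j < k \<longrightarrow>
        \<beta> (j+1) = Gnorm N (g j) \<and>
        \<beta> (j+1) \<noteq> 0 \<and>
        q (j+1) = (1 / \<beta> (j+1)) \<cdot>\<^sub>v g j \<and>
        w (j+1) = minv M *\<^sub>v (A *\<^sub>v q (j+1)) - \<beta> (j+1) \<cdot>\<^sub>v v j \<and>
        r (j+1) = q (j+1) - (\<beta> (j+1) / \<alpha> j) \<cdot>\<^sub>v r j)"

end

theory Submission
  imports Defs
begin

(* Each column relation restates one line of the recurrence: the two-term recurrences for r_j
   and w_j say Q_k = D_k B_k and M^-1 A Q_k = V_k B_k, and C (r_j / alpha_j) = t_j gives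
   C Q_k = T_k B_k.  The q_j arise by N-orthogonal Gram-Schmidt, so inductively Q_k^T N Q_k = I
   and Q_k^T N g_k = 0, and the definition of g_j reads A^T V_k + T_k = N (Q_k H_k + g_k e_k^T).
   Multiplying by Q_k^T gives H_k = Q_k^T (A^T V_k + T_k) = B_k^T (V_k^T M^T V_k + D_k^T C D_k)
   = B_k^T L_k^T, using that D_k^T C D_k is symmetric.  L_k has unit diagonal by the
   normalisation defining alpha_j, and it is lower triangular because H_k is upper Hessenberg
   with the same subdiagonal beta as the lower bidiagonal factor B_k^T.  Finally
   N^-1 S Q_k = N^-1 (A^T V_k + T_k) B_k, and e_k^T B_k = alpha_k e_k^T. *)

lemma pos_def_quadratic_nonneg:
  assumes "pos_def d X" "x \<in> carrier_vec d"
  shows "0 \<le> x \<bullet> (X *\<^sub>v x)"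
  using assms unfolding pos_def_def by (cases "x = 0\<^sub>v d") (auto intro: less_imp_le)

lemma pos_def_minv:
  assumes "pos_def d X"
  shows "minv X \<in> carrier_mat d d" "X * minv X = 1\<^sub>m d" "minv X * X = 1\<^sub>m d"
proof -
  have X: "X \<in> carrier_mat d d" using assms unfolding pos_def_def by auto
  have "det X \<noteq> 0"
  proof
    assume "det X = 0"
    then obtain x where x: "x \<in> carrier_vec d" "x \<noteq> 0\<^sub>v d" "X *\<^sub>v x = 0\<^sub>v d"
      using det_0_iff_vec_prod_zero[OF X] by auto
    then have "x \<bullet> (X *\<^sub>v x) > 0" using assms unfolding pos_def_def by auto
    with x show False by simp
  qed
  then have "X \<in> Units (ring_mat TYPE(real) d ())" using det_non_zero_imp_unit[OF X] by auto
  then obtain Y where "mat_inverse X = Some Y"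
    using mat_inverse(1)[OF X, where b="()"] by (cases "mat_inverse X") auto
  then show "minv X \<in> carrier_mat d d" "X * minv X = 1\<^sub>m d" "minv X * X = 1\<^sub>m d"
    using mat_inverse(2)[OF X] unfolding minv_def by auto
qed

lemma pos_def_Gnorm_nonzero:
  assumes "pos_def d G" "x \<in> carrier_vec d" "x \<noteq> 0\<^sub>v d"
  shows "Gnorm G x \<noteq> 0"
  using assms unfolding pos_def_def Gnorm_def by auto

lemma Gnorm_normalized:
  assumes G: "pos_def d G" and x: "x \<in> carrier_vec d" and nz: "Gnorm G x \<noteq> 0"
  shows "((1 / Gnorm G x) \<cdot>\<^sub>v x) \<bullet> (G *\<^sub>v ((1 / Gnorm G x) \<cdot>\<^sub>v x)) = 1"
proof -
  have "G \<in> carrier_mat d d" using G unfolding pos_def_def by simp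
  then have "((1 / Gnorm G x) \<cdot>\<^sub>v x) \<bullet> (G *\<^sub>v ((1 / Gnorm G x) \<cdot>\<^sub>v x))
      = (x \<bullet> (G *\<^sub>v x)) / (Gnorm G x)\<^sup>2"
    using x by (simp add: mult_mat_vec power2_eq_square)
  also have "x \<bullet> (G *\<^sub>v x) = (Gnorm G x)\<^sup>2"
    using pos_def_quadratic_nonneg[OF G x] unfolding Gnorm_def by simp
  finally show ?thesis using nz by simp
qed

lemma symmetric_bilinear_commute:
  fixes X :: "real mat"
  assumes X: "X \<in> carrier_mat d d" "X\<^sup>T = X" and x: "x \<in> carrier_vec d" and y: "y \<in> carrier_vec d"
  shows "x \<bullet> (X *\<^sub>v y) = y \<bullet> (X *\<^sub>v x)"
  using transpose_vec_mult_scalar[OF X(1) y x] X(2)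
    comm_scalar_prod[OF mult_mat_vec_carrier[OF X(1) x] y] by simp

(* Variants of the carrier-based library rules whose side conditions mention only dimensions:
   simp can discharge those, so with these rules it normalises matrix expressions. *)
lemma assoc_mult_mat_dims:
  fixes A B C :: "'a :: semiring_0 mat"
  shows "dim_col A = dim_row B \<Longrightarrow> dim_col B = dim_row C \<Longrightarrow> A * B * C = A * (B * C)"
  by (rule assoc_mult_mat[of A "dim_row A" "dim_col A" B "dim_col B" C "dim_col C"]) auto

lemma mult_add_distrib_mat_dims:
  fixes A B C :: "'a :: semiring_0 mat"
  shows "dim_col A = dim_row B \<Longrightarrow> dim_row C = dim_row B \<Longrightarrow> dim_col C = dim_col B
    \<Longrightarrow> A * (B + C) = A * B + A * C"
  by (rule mult_add_distrib_mat[of A "dim_row A" "dim_col A" B "dim_col B" C]) auto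

lemma add_mult_distrib_mat_dims:
  fixes A B C :: "'a :: semiring_0 mat"
  shows "dim_row B = dim_row A \<Longrightarrow> dim_col B = dim_col A \<Longrightarrow> dim_col A = dim_row C
    \<Longrightarrow> (A + B) * C = A * C + B * C"
  by (rule add_mult_distrib_mat[of A "dim_row A" "dim_col A" B C "dim_col C"]) auto

lemma transpose_mult_dims:
  fixes A B :: "'a :: comm_semiring_0 mat"
  shows "dim_col A = dim_row B \<Longrightarrow> (A * B)\<^sup>T = B\<^sup>T * A\<^sup>T"
  by (rule transpose_mult[of A "dim_row A" "dim_col A" B "dim_col B"]) auto

lemma transpose_add_dims:
  fixes A B :: "'a :: plus mat"
  shows "dim_row B = dim_row A \<Longrightarrow> dim_col B = dim_col A \<Longrightarrow> (A + B)\<^sup>T = A\<^sup>T + B\<^sup>T"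
  by (rule transpose_add[of A "dim_row A" "dim_col A" B]) auto

lemmas mat_algebra_dims = assoc_mult_mat_dims mult_add_distrib_mat_dims add_mult_distrib_mat_dims
  transpose_mult_dims transpose_add_dims

lemma mult_mat_vec_zero: "dim_col X = d \<Longrightarrow> X *\<^sub>v 0\<^sub>v d = 0\<^sub>v (dim_row X)"
  by (intro eq_vecI) auto

lemma colsmat_carrier[simp]: "colsmat d x k \<in> carrier_mat d k"
  unfolding colsmat_def using mat_of_cols_carrier(1)[of d "map x [1..<k+1]"] by (simp del: upt_Suc)

lemma dim_colsmat[simp]: "dim_row (colsmat d x k) = d" "dim_col (colsmat d x k) = k"
  using colsmat_carrier[of d x k] unfolding carrier_mat_def by auto

lemma colsmat_index[simp]: "i < d \<Longrightarrow> j < k \<Longrightarrow> colsmat d x k $$ (i, j) = x (j + 1) $ i"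
  unfolding colsmat_def mat_of_cols_def by (simp del: upt_Suc)

lemma col_colsmat: "j < k \<Longrightarrow> x (j + 1) \<in> carrier_vec d \<Longrightarrow> col (colsmat d x k) j = x (j + 1)"
  by (rule eq_vecI) auto

lemma colsmat_cong:
  "(\<And>j. 1 \<le> j \<Longrightarrow> j \<le> k \<Longrightarrow> x j = y j) \<Longrightarrow> colsmat d x k = colsmat d y k"
  by (rule eq_matI) auto

lemma colsmat_eqI:
  assumes "X \<in> carrier_mat d k" "\<And>j. j < k \<Longrightarrow> col X j = x (j + 1)"
  shows "X = colsmat d x k"
proof (rule eq_matI)
  fix i j assume "i < dim_row (colsmat d x k)" "j < dim_col (colsmat d x k)"
  then have "X $$ (i, j) = col X j $ i" using assms(1) by simp
  then show "X $$ (i, j) = colsmat d x k $$ (i, j)"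
    using assms \<open>i < dim_row (colsmat d x k)\<close> \<open>j < dim_col (colsmat d x k)\<close> by simp
qed (use assms in auto)

lemma mult_colsmat:
  assumes "X \<in> carrier_mat d' d" "\<And>j. 1 \<le> j \<Longrightarrow> j \<le> k \<Longrightarrow> x j \<in> carrier_vec d"
  shows "X * colsmat d x k = colsmat d' (\<lambda>j. X *\<^sub>v x j) k"
  using assms by (intro colsmat_eqI) (auto simp: col_colsmat)

lemma add_colsmat:
  assumes "\<And>j. 1 \<le> j \<Longrightarrow> j \<le> k \<Longrightarrow> y j \<in> carrier_vec d"
  shows "colsmat d x k + colsmat d y k = colsmat d (\<lambda>j. x j + y j) k"
proof (rule eq_matI)
  fix i j assume "i < dim_row (colsmat d (\<lambda>j. x j + y j) k)" "j < dim_col (colsmat d (\<lambda>j. x j + y j) k)"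
  then show "(colsmat d x k + colsmat d y k) $$ (i, j) = colsmat d (\<lambda>j. x j + y j) k $$ (i, j)"
    using assms[of "j + 1"] by simp
qed auto

lemma smult_colsmat:
  assumes "\<And>j. 1 \<le> j \<Longrightarrow> j \<le> k \<Longrightarrow> x j \<in> carrier_vec d"
  shows "a \<cdot>\<^sub>m colsmat d x k = colsmat d (\<lambda>j. a \<cdot>\<^sub>v x j) k"
proof (rule eq_matI)
  fix i j assume "i < dim_row (colsmat d (\<lambda>j. a \<cdot>\<^sub>v x j) k)" "j < dim_col (colsmat d (\<lambda>j. a \<cdot>\<^sub>v x j) k)"
  then show "(a \<cdot>\<^sub>m colsmat d x k) $$ (i, j) = colsmat d (\<lambda>j. a \<cdot>\<^sub>v x j) k $$ (i, j)"
    using assms[of "j + 1"] by simp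
qed auto

lemma colsmat_zero: "colsmat d (\<lambda>j. 0\<^sub>v d) k = 0\<^sub>m d k"
  by (rule eq_matI) auto

lemma colsmat_transpose_mult_index:
  assumes "a < k" "b < l" "x (a + 1) \<in> carrier_vec d" "y (b + 1) \<in> carrier_vec d"
  shows "((colsmat d x k)\<^sup>T * colsmat d y l) $$ (a, b) = x (a + 1) \<bullet> y (b + 1)"
  using assms by (simp add: col_colsmat)

lemma colsmat_transpose_mult_vec_index:
  assumes "a < k" "x (a + 1) \<in> carrier_vec d" "y \<in> carrier_vec d"
  shows "((colsmat d x k)\<^sup>T *\<^sub>v y) $ a = x (a + 1) \<bullet> y"
  using assms by (simp add: col_colsmat)

lemma colsmat_mult_vec_index:
  "i < d \<Longrightarrow> c \<in> carrier_vec k \<Longrightarrow> (colsmat d x k *\<^sub>v c) $ i = (\<Sum>l<k. x (l + 1) $ i * c $ l)"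
  by (simp add: scalar_prod_def lessThan_atLeast0)

lemma colsmat_Gram_eq_one:
  assumes G: "G \<in> carrier_mat d d" and x: "\<And>j. 1 \<le> j \<Longrightarrow> j \<le> k \<Longrightarrow> x j \<in> carrier_vec d"
    and orth: "\<And>a c. 1 \<le> a \<Longrightarrow> a \<le> k \<Longrightarrow> 1 \<le> c \<Longrightarrow> c \<le> k
      \<Longrightarrow> x a \<bullet> (G *\<^sub>v x c) = (if a = c then 1 else 0)"
  shows "(colsmat d x k)\<^sup>T * G * colsmat d x k = 1\<^sub>m k"
proof -
  have "(colsmat d x k)\<^sup>T * G * colsmat d x k = (colsmat d x k)\<^sup>T * (G * colsmat d x k)"
    using assoc_mult_mat[of "(colsmat d x k)\<^sup>T" k d G d "colsmat d x k" k] G by simp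
  also have "\<dots> = (colsmat d x k)\<^sup>T * colsmat d (\<lambda>j. G *\<^sub>v x j) k"
    by (simp only: mult_colsmat[OF G x])
  also have "\<dots> = 1\<^sub>m k"
  proof (rule eq_matI)
    fix a c assume "a < dim_row (1\<^sub>m k :: real mat)" "c < dim_col (1\<^sub>m k :: real mat)"
    then show "((colsmat d x k)\<^sup>T * colsmat d (\<lambda>j. G *\<^sub>v x j) k) $$ (a, c) = 1\<^sub>m k $$ (a, c)"
      using colsmat_transpose_mult_index[of a k c k x d "\<lambda>j. G *\<^sub>v x j"]
        G x[of "a + 1"] x[of "c + 1"] orth[of "a + 1" "c + 1"] by simp
  qed simp_all
  finally show ?thesis .
qed

lemma outer_product_carrier[simp]: "mat_of_cols d [x] * mat_of_rows k [y] \<in> carrier_mat d k"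
  by (rule carrier_matI) (simp_all add: mat_of_cols_def mat_of_rows_def)

lemma outer_unit_vec_eq_colsmat:
  assumes "x \<in> carrier_vec d"
  shows "mat_of_cols d [x] * mat_of_rows k [unit_vec k (k - 1)]
    = colsmat d (\<lambda>j. if j = k then x else 0\<^sub>v d) k"
  using assms
  by (intro eq_matI) (auto simp: mat_of_cols_def mat_of_rows_def scalar_prod_def unit_vec_def)

lemma Bmat_carrier[simp]: "Bmat \<alpha> \<beta> k \<in> carrier_mat k k"
  unfolding Bmat_def by simp

lemma Hmat_carrier[simp]: "Hmat h \<beta> k \<in> carrier_mat k k"
  unfolding Hmat_def by simp

lemma dim_Bmat[simp]: "dim_row (Bmat \<alpha> \<beta> k) = k" "dim_col (Bmat \<alpha> \<beta> k) = k"
  unfolding Bmat_def by simp_all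

lemma dim_Hmat[simp]: "dim_row (Hmat h \<beta> k) = k" "dim_col (Hmat h \<beta> k) = k"
  unfolding Hmat_def by simp_all

lemma col_mult_Bmat:
  assumes Y: "Y \<in> carrier_mat d k" and j: "j < k"
  shows "col (Y * Bmat \<alpha> \<beta> k) j
    = \<alpha> (j + 1) \<cdot>\<^sub>v col Y j + (if j = 0 then 0\<^sub>v d else \<beta> (j + 1) \<cdot>\<^sub>v col Y (j - 1))"
proof (rule eq_vecI)
  fix i assume "i < dim_vec (\<alpha> (j + 1) \<cdot>\<^sub>v col Y j + (if j = 0 then 0\<^sub>v d else \<beta> (j + 1) \<cdot>\<^sub>v col Y (j - 1)))"
  then have i: "i < d" using Y by (auto split: if_splits)
  have "col (Y * Bmat \<alpha> \<beta> k) j $ i = (\<Sum>l<k. Y $$ (i, l) * Bmat \<alpha> \<beta> k $$ (l, j))"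
    using Y i j by (simp add: scalar_prod_def lessThan_atLeast0 Bmat_def)
  also have "\<dots> = (\<Sum>l<k. Y $$ (i, l) * (if l = j then \<alpha> (j + 1) else 0)
      + Y $$ (i, l) * (if 0 < j \<and> l = j - 1 then \<beta> (j + 1) else 0))"
    by (rule sum.cong) (auto simp: Bmat_def j)
  also have "\<dots> = Y $$ (i, j) * \<alpha> (j + 1) + (if 0 < j then Y $$ (i, j - 1) * \<beta> (j + 1) else 0)"
    using j by (simp add: sum.distrib if_distrib[of "(*) _"] sum.delta cong: if_cong)
  finally show "col (Y * Bmat \<alpha> \<beta> k) j $ i
      = (\<alpha> (j + 1) \<cdot>\<^sub>v col Y j + (if j = 0 then 0\<^sub>v d else \<beta> (j + 1) \<cdot>\<^sub>v col Y (j - 1))) $ i"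
    using Y i j by auto
qed (use Y in simp)

lemma colsmat_mult_Bmat:
  assumes y: "\<And>j. 1 \<le> j \<Longrightarrow> j \<le> k \<Longrightarrow> y j \<in> carrier_vec d"
  shows "colsmat d y k * Bmat \<alpha> \<beta> k
    = colsmat d (\<lambda>j. \<alpha> j \<cdot>\<^sub>v y j + (if j = 1 then 0\<^sub>v d else \<beta> j \<cdot>\<^sub>v y (j - 1))) k"
proof (rule colsmat_eqI)
  fix j assume j: "j < k"
  have "col (colsmat d y k * Bmat \<alpha> \<beta> k) j = \<alpha> (j + 1) \<cdot>\<^sub>v col (colsmat d y k) j
      + (if j = 0 then 0\<^sub>v d else \<beta> (j + 1) \<cdot>\<^sub>v col (colsmat d y k) (j - 1))"
    by (rule col_mult_Bmat[OF colsmat_carrier j])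
  then show "col (colsmat d y k * Bmat \<alpha> \<beta> k) j
      = \<alpha> (j + 1) \<cdot>\<^sub>v y (j + 1) + (if j + 1 = 1 then 0\<^sub>v d else \<beta> (j + 1) \<cdot>\<^sub>v y (j + 1 - 1))"
    using j y[of "j + 1"] y[of j] col_colsmat[of j k y d] col_colsmat[of "j - 1" k y d] by auto
qed (rule mult_carrier_mat[OF colsmat_carrier Bmat_carrier])

lemma outer_unit_vec_mult_Bmat:
  assumes x: "x \<in> carrier_vec d" and k: "1 \<le> k"
  shows "mat_of_cols d [x] * mat_of_rows k [unit_vec k (k - 1)] * Bmat \<alpha> \<beta> k
    = \<alpha> k \<cdot>\<^sub>m (mat_of_cols d [x] * mat_of_rows k [unit_vec k (k - 1)])"
proof -
  let ?e = "\<lambda>j. if j = k then x else 0\<^sub>v d"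
  have e: "?e j \<in> carrier_vec d" for j using x by simp
  have "colsmat d ?e k * Bmat \<alpha> \<beta> k = colsmat d (\<lambda>j. \<alpha> k \<cdot>\<^sub>v ?e j) k"
    unfolding colsmat_mult_Bmat[OF e] using k x by (intro colsmat_cong) auto
  then show ?thesis
    unfolding outer_unit_vec_eq_colsmat[OF x] smult_colsmat[OF e] .
qed

lemma Bmat_transpose_mult_index:
  assumes X: "X \<in> carrier_mat k c" and a: "a < k" and b: "b < c"
  shows "((Bmat \<alpha> \<beta> k)\<^sup>T * X) $$ (a, b)
    = \<alpha> (a + 1) * X $$ (a, b) + (if a = 0 then 0 else \<beta> (a + 1) * X $$ (a - 1, b))"
proof -
  have "(Bmat \<alpha> \<beta> k)\<^sup>T * X = (X\<^sup>T * Bmat \<alpha> \<beta> k)\<^sup>T"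
    using transpose_mult[of "X\<^sup>T" c k "Bmat \<alpha> \<beta> k" k] X by simp
  then have "((Bmat \<alpha> \<beta> k)\<^sup>T * X) $$ (a, b) = col (X\<^sup>T * Bmat \<alpha> \<beta> k) a $ b"
    using carrier_matD[OF X] carrier_matD[OF Bmat_carrier] a b by simp
  also have "\<dots> = \<alpha> (a + 1) * X $$ (a, b) + (if a = 0 then 0 else \<beta> (a + 1) * X $$ (a - 1, b))"
    using col_mult_Bmat[of "X\<^sup>T" c k a] X a b by auto
  finally show ?thesis .
qed

(* Row a + 1 of the product involves only rows a and a + 1 of X. *)
lemma Bmat_transpose_factor_upper_triangular:
  assumes X: "X \<in> carrier_mat k k" and H: "Hmat h \<beta> k = (Bmat \<alpha> \<beta> k)\<^sup>T * X"
    and \<alpha>: "\<And>i. 1 \<le> i \<Longrightarrow> i \<le> k \<Longrightarrow> \<alpha> i \<noteq> 0" and diag: "\<And>i. i < k \<Longrightarrow> X $$ (i, i) = 1"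
  shows "c < a \<Longrightarrow> a < k \<Longrightarrow> X $$ (a, c) = 0"
proof (induction a arbitrary: c)
  case 0
  then show ?case by simp
next
  case (Suc a)
  have "Hmat h \<beta> k $$ (Suc a, c) = \<alpha> (a + 2) * X $$ (Suc a, c) + \<beta> (a + 2) * X $$ (a, c)"
    using H Bmat_transpose_mult_index[OF X Suc.prems(2)] Suc.prems by simp
  moreover have "Hmat h \<beta> k $$ (Suc a, c) = \<beta> (a + 2) * X $$ (a, c)"
  proof (cases "c = a")
    case True
    then show ?thesis using diag[of a] Suc.prems unfolding Hmat_def by simp
  next
    case False
    then show ?thesis using Suc unfolding Hmat_def by simp
  qed
  ultimately show ?case using \<alpha>[of "a + 2"] Suc.prems by simp
qed

lemma col_colsmat_mult_Hmat:
  assumes x: "\<And>j. 1 \<le> j \<Longrightarrow> j \<le> k \<Longrightarrow> x j \<in> carrier_vec d" and i: "i < k"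
    and h: "h (i + 1) \<in> carrier_vec (i + 1)"
  shows "col (colsmat d x k * Hmat h \<beta> k) i
    = colsmat d x (i + 1) *\<^sub>v h (i + 1) + (if i + 1 < k then \<beta> (i + 2) \<cdot>\<^sub>v x (i + 2) else 0\<^sub>v d)"
proof (rule eq_vecI)
  fix a assume "a < dim_vec (colsmat d x (i + 1) *\<^sub>v h (i + 1)
      + (if i + 1 < k then \<beta> (i + 2) \<cdot>\<^sub>v x (i + 2) else 0\<^sub>v d))"
  then have a: "a < d" using x[of "i + 2"] by (auto split: if_splits)
  let ?f = "\<lambda>l. x (l + 1) $ a"
  have "col (colsmat d x k * Hmat h \<beta> k) i $ a
      = (\<Sum>l<k. ?f l * (if l \<le> i then h (i + 1) $ l else if l = i + 1 then \<beta> (i + 2) else 0))"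
    using a i by (simp add: scalar_prod_def lessThan_atLeast0 Hmat_def)
  also have "\<dots> = (\<Sum>l<k. (if l < i + 1 then ?f l * h (i + 1) $ l else 0)
      + (if l = i + 1 then \<beta> (i + 2) * ?f l else 0))"
    by (rule sum.cong) auto
  also have "\<dots> = (\<Sum>l<i + 1. ?f l * h (i + 1) $ l) + (if i + 1 < k then \<beta> (i + 2) * ?f (i + 1) else 0)"
  proof -
    have "(\<Sum>l<k. if l < i + 1 then ?f l * h (i + 1) $ l else 0) = (\<Sum>l<i + 1. ?f l * h (i + 1) $ l)"
      using i by (intro sum.mono_neutral_cong_right) auto
    then show ?thesis by (simp add: sum.distrib sum.delta)
  qed
  also have "\<dots> = (colsmat d x (i + 1) *\<^sub>v h (i + 1)) $ a
      + (if i + 1 < k then (\<beta> (i + 2) \<cdot>\<^sub>v x (i + 2)) $ a else 0)"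
    using colsmat_mult_vec_index[OF a h, of x] a x[of "i + 2"] by (cases "i + 1 < k") simp_all
  finally show "col (colsmat d x k * Hmat h \<beta> k) i $ a = (colsmat d x (i + 1) *\<^sub>v h (i + 1)
      + (if i + 1 < k then \<beta> (i + 2) \<cdot>\<^sub>v x (i + 2) else 0\<^sub>v d)) $ a"
    using a x[of "i + 2"] by (cases "i + 1 < k") simp_all
qed (use x[of "i + 2"] in auto)

lemma Gram_Schmidt_residual_orthogonal:
  fixes N Q :: "'a :: comm_ring_1 mat"
  assumes N: "N \<in> carrier_mat n n" and Q: "Q \<in> carrier_mat n j"
    and orth: "Q\<^sup>T * N * Q = 1\<^sub>m j" and x: "x \<in> carrier_vec n"
  shows "Q\<^sup>T *\<^sub>v (N *\<^sub>v (x - Q *\<^sub>v (Q\<^sup>T *\<^sub>v (N *\<^sub>v x)))) = 0\<^sub>v j"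
proof -
  define c where "c = Q\<^sup>T *\<^sub>v (N *\<^sub>v x)"
  have c: "c \<in> carrier_vec j" unfolding c_def using Q N x by simp
  have "N *\<^sub>v (x - Q *\<^sub>v c) = N *\<^sub>v x - N *\<^sub>v (Q *\<^sub>v c)"
    using Q c by (intro mult_minus_distrib_mat_vec[OF N x]) simp
  then have "Q\<^sup>T *\<^sub>v (N *\<^sub>v (x - Q *\<^sub>v c)) = c - Q\<^sup>T *\<^sub>v (N *\<^sub>v (Q *\<^sub>v c))"
    using N Q x c unfolding c_def by (simp add: mult_minus_distrib_mat_vec[of _ j n])
  also have "Q\<^sup>T *\<^sub>v (N *\<^sub>v (Q *\<^sub>v c)) = (Q\<^sup>T * N * Q) *\<^sub>v c"
    using assoc_mult_mat[of "Q\<^sup>T" j n N n Q j] assoc_mult_mat_vec[of "Q\<^sup>T" j n "N * Q" j c]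
      assoc_mult_mat_vec[OF N Q c] N Q c by simp
  also have "\<dots> = c" using orth c by simp
  finally show ?thesis unfolding c_def using c c_def by simp
qed

locale nsCRAIG =
  fixes m n k :: nat
    and M A C N :: "real mat" and b :: "real vec"
    and q w r s v t h g :: "nat \<Rightarrow> real vec" and \<alpha> \<beta> :: "nat \<Rightarrow> real"
  assumes M_pos_def: "pos_def m M"
    and A_carrier: "A \<in> carrier_mat m n"
    and C_pos_semidef: "pos_semidef n C" and C_symmetric: "C\<^sup>T = C"
    and b_carrier: "b \<in> carrier_vec n" and b_nonzero: "b \<noteq> 0\<^sub>v n"
    and N_pos_def: "pos_def n N" and N_symmetric: "N\<^sup>T = N"
    and k_pos: "1 \<le> k"
    and recurrence: "nsCRAIG_upto m n M A C N b k q w r s \<alpha> v t h g \<beta>"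
begin

abbreviation "Qk \<equiv> colsmat n q k"
abbreviation "Vk \<equiv> colsmat m v k"
abbreviation "Tk \<equiv> colsmat n t k"
abbreviation "Dk \<equiv> colsmat n (\<lambda>j. (1 / \<alpha> j) \<cdot>\<^sub>v r j) k"
abbreviation "Bk \<equiv> Bmat \<alpha> \<beta> k"
abbreviation "Hk \<equiv> Hmat h \<beta> k"
abbreviation "Lk \<equiv> Vk\<^sup>T * M * Vk + Dk\<^sup>T * Tk"
abbreviation "Gk \<equiv> mat_of_cols n [g k] * mat_of_rows k [unit_vec k (k - 1)]"

lemma M_carrier[simp]: "M \<in> carrier_mat m m"
  using M_pos_def unfolding pos_def_def by simp

lemma N_carrier[simp]: "N \<in> carrier_mat n n"
  using N_pos_def unfolding pos_def_def by simp

lemma C_carrier[simp]: "C \<in> carrier_mat n n"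
  using C_pos_semidef unfolding pos_semidef_def by simp

lemmas M_inverse[simp] = pos_def_minv[OF M_pos_def]
lemmas N_inverse[simp] = pos_def_minv[OF N_pos_def]
lemmas [simp] = A_carrier carrier_matD[OF A_carrier] carrier_matD[OF M_carrier] carrier_matD[OF N_carrier]
  carrier_matD[OF C_carrier] carrier_matD[OF M_inverse(1)] carrier_matD[OF N_inverse(1)]

lemma
  shows beta_1: "\<beta> 1 = Gnorm (minv N) b" and q_1: "q 1 = (1 / \<beta> 1) \<cdot>\<^sub>v (minv N *\<^sub>v b)"
    and r_1: "r 1 = q 1" and w_1: "w 1 = minv M *\<^sub>v (A *\<^sub>v q 1)"
  using recurrence unfolding nsCRAIG_upto_def by blast+

lemma
  assumes "1 \<le> j" "j \<le> k"
  shows s_eq: "s j = C *\<^sub>v r j"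
    and alpha_eq: "\<alpha> j = sqrt (w j \<bullet> (M *\<^sub>v w j) + r j \<bullet> s j)"
    and alpha_nonzero: "\<alpha> j \<noteq> 0"
    and v_eq: "v j = (1 / \<alpha> j) \<cdot>\<^sub>v w j"
    and t_eq: "t j = (1 / \<alpha> j) \<cdot>\<^sub>v s j"
    and h_eq: "h j = (colsmat n q j)\<^sup>T *\<^sub>v (N *\<^sub>v (minv N *\<^sub>v (A\<^sup>T *\<^sub>v v j + t j)))"
    and g_eq: "g j = minv N *\<^sub>v (A\<^sup>T *\<^sub>v v j + t j) - colsmat n q j *\<^sub>v h j"
  using recurrence assms unfolding nsCRAIG_upto_def by blast+

lemma
  assumes "1 \<le> j" "j < k"
  shows beta_Suc_eq: "\<beta> (j + 1) = Gnorm N (g j)"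
    and beta_Suc_nonzero: "\<beta> (j + 1) \<noteq> 0"
    and q_Suc_eq: "q (j + 1) = (1 / \<beta> (j + 1)) \<cdot>\<^sub>v g j"
    and w_Suc_eq: "w (j + 1) = minv M *\<^sub>v (A *\<^sub>v q (j + 1)) - \<beta> (j + 1) \<cdot>\<^sub>v v j"
    and r_Suc_eq: "r (j + 1) = q (j + 1) - (\<beta> (j + 1) / \<alpha> j) \<cdot>\<^sub>v r j"
  using recurrence assms unfolding nsCRAIG_upto_def by blast+

lemma w_r_carrier: "1 \<le> j \<Longrightarrow> j \<le> k \<Longrightarrow> w j \<in> carrier_vec m \<and> r j \<in> carrier_vec n"
proof (induction j rule: nat_induct_at_least)
  case base
  show ?case unfolding w_1 r_1 q_1 by (auto intro!: carrier_vecI)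
next
  case (Suc j)
  then have "v j \<in> carrier_vec m" using v_eq[of j] by simp
  then show ?case
    using Suc w_Suc_eq[of j] r_Suc_eq[of j] by (auto intro!: carrier_vecI)
qed

lemma w_carrier[simp]: "1 \<le> j \<Longrightarrow> j \<le> k \<Longrightarrow> w j \<in> carrier_vec m"
  and r_carrier[simp]: "1 \<le> j \<Longrightarrow> j \<le> k \<Longrightarrow> r j \<in> carrier_vec n"
  using w_r_carrier by blast+

lemma v_carrier[simp]: "1 \<le> j \<Longrightarrow> j \<le> k \<Longrightarrow> v j \<in> carrier_vec m"
  by (simp add: v_eq)

lemma s_carrier[simp]: "1 \<le> j \<Longrightarrow> j \<le> k \<Longrightarrow> s j \<in> carrier_vec n"
  by (auto simp: s_eq intro!: carrier_vecI)

lemma t_carrier[simp]: "1 \<le> j \<Longrightarrow> j \<le> k \<Longrightarrow> t j \<in> carrier_vec n"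
  by (simp add: t_eq)

lemma h_carrier[simp]: "1 \<le> j \<Longrightarrow> j \<le> k \<Longrightarrow> h j \<in> carrier_vec j"
  by (auto simp: h_eq intro!: carrier_vecI)

lemma g_carrier[simp]: "1 \<le> j \<Longrightarrow> j \<le> k \<Longrightarrow> g j \<in> carrier_vec n"
  by (auto simp: g_eq intro!: carrier_vecI)

lemma q_carrier[simp]:
  assumes "1 \<le> j" "j \<le> k"
  shows "q j \<in> carrier_vec n"
proof (cases "j = 1")
  case True
  then show ?thesis unfolding True q_1 by (auto intro!: carrier_vecI)
next
  case False
  then show ?thesis using assms q_Suc_eq[of "j - 1"] g_carrier[of "j - 1"] by (auto intro!: carrier_vecI)
qed

lemmas dim_vec_iterates[simp] = carrier_vecD[OF w_carrier] carrier_vecD[OF r_carrier]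
  carrier_vecD[OF v_carrier] carrier_vecD[OF s_carrier] carrier_vecD[OF t_carrier]
  carrier_vecD[OF h_carrier] carrier_vecD[OF g_carrier] carrier_vecD[OF q_carrier]

lemma alpha_squared:
  assumes "1 \<le> j" "j \<le> k"
  shows "(\<alpha> j)\<^sup>2 = w j \<bullet> (M *\<^sub>v w j) + r j \<bullet> s j"
  using alpha_eq[OF assms] pos_def_quadratic_nonneg[OF M_pos_def w_carrier[OF assms]]
    C_pos_semidef s_eq[OF assms] r_carrier[OF assms] unfolding pos_semidef_def by simp

lemma q_eq_bidiagonal:
  assumes "1 \<le> j" "j \<le> k"
  shows "q j = \<alpha> j \<cdot>\<^sub>v ((1 / \<alpha> j) \<cdot>\<^sub>v r j)
    + (if j = 1 then 0\<^sub>v n else \<beta> j \<cdot>\<^sub>v ((1 / \<alpha> (j - 1)) \<cdot>\<^sub>v r (j - 1)))"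
proof (cases "j = 1")
  case True
  then show ?thesis using alpha_nonzero[OF assms] r_1 q_carrier[OF assms]
    by (intro eq_vecI) auto
next
  case False
  then have i: "1 \<le> j - 1" "j - 1 < k" using assms by auto
  show ?thesis
    using False r_Suc_eq[OF i] alpha_nonzero[OF assms] alpha_nonzero[of "j - 1"] i assms
    by (intro eq_vecI) auto
qed

lemma minv_M_A_q_eq_bidiagonal:
  assumes "1 \<le> j" "j \<le> k"
  shows "minv M *\<^sub>v (A *\<^sub>v q j) = \<alpha> j \<cdot>\<^sub>v v j + (if j = 1 then 0\<^sub>v m else \<beta> j \<cdot>\<^sub>v v (j - 1))"
proof -
  have "\<alpha> j \<cdot>\<^sub>v v j = w j"
    using v_eq[OF assms] alpha_nonzero[OF assms] w_carrier[OF assms] by (intro eq_vecI) auto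
  moreover have "minv M *\<^sub>v (A *\<^sub>v q j) = w j + (if j = 1 then 0\<^sub>v m else \<beta> j \<cdot>\<^sub>v v (j - 1))"
  proof (cases "j = 1")
    case True
    then show ?thesis using w_1 by (intro eq_vecI) auto
  next
    case False
    then have i: "1 \<le> j - 1" "j - 1 < k" using assms by auto
    show ?thesis using False w_Suc_eq[OF i] i by (intro eq_vecI) auto
  qed
  ultimately show ?thesis by simp
qed

lemma C_scaled_r_eq_t: "1 \<le> j \<Longrightarrow> j \<le> k \<Longrightarrow> C *\<^sub>v ((1 / \<alpha> j) \<cdot>\<^sub>v r j) = t j"
  by (simp add: mult_mat_vec[OF C_carrier r_carrier] t_eq s_eq)

lemma Qk_eq_Dk_Bk: "Qk = Dk * Bk"
proof -
  have "Dk * Bk = colsmat n (\<lambda>j. \<alpha> j \<cdot>\<^sub>v ((1 / \<alpha> j) \<cdot>\<^sub>v r j)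
      + (if j = 1 then 0\<^sub>v n else \<beta> j \<cdot>\<^sub>v ((1 / \<alpha> (j - 1)) \<cdot>\<^sub>v r (j - 1)))) k"
    by (rule colsmat_mult_Bmat) simp
  also have "\<dots> = Qk" by (rule colsmat_cong) (simp add: q_eq_bidiagonal)
  finally show ?thesis ..
qed

lemma C_Dk_eq_Tk: "C * Dk = Tk"
  by (simp add: mult_colsmat[OF C_carrier] C_scaled_r_eq_t cong: colsmat_cong)

lemma C_Qk_eq_Tk_Bk: "C * Qk = Tk * Bk"
proof -
  have "C * Qk = C * (Dk * Bk)" by (simp only: Qk_eq_Dk_Bk[symmetric])
  also have "\<dots> = C * Dk * Bk" using assoc_mult_mat[of C n n Dk k Bk k] by simp
  also have "\<dots> = Tk * Bk" by (simp only: C_Dk_eq_Tk)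
  finally show ?thesis .
qed

lemma Vk_Bk_eq_minv_M_A_Qk: "Vk * Bk = minv M * (A * Qk)"
proof -
  have "Vk * Bk = colsmat m (\<lambda>j. \<alpha> j \<cdot>\<^sub>v v j + (if j = 1 then 0\<^sub>v m else \<beta> j \<cdot>\<^sub>v v (j - 1))) k"
    by (rule colsmat_mult_Bmat) simp
  also have "\<dots> = colsmat m (\<lambda>j. minv M *\<^sub>v (A *\<^sub>v q j)) k"
    by (rule colsmat_cong) (simp add: minv_M_A_q_eq_bidiagonal)
  also have "\<dots> = minv M * colsmat m (\<lambda>j. A *\<^sub>v q j) k"
    by (rule mult_colsmat[symmetric]) (auto intro: carrier_vecI)
  also have "colsmat m (\<lambda>j. A *\<^sub>v q j) k = A * Qk"
    by (rule mult_colsmat[symmetric]) auto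
  finally show ?thesis .
qed

lemma A_Qk_eq_M_Vk_Bk: "A * Qk = M * Vk * Bk"
proof -
  have "M * Vk * Bk = M * (Vk * Bk)" using assoc_mult_mat[of M m m Vk k Bk k] by simp
  also have "\<dots> = M * (minv M * (A * Qk))" by (simp only: Vk_Bk_eq_minv_M_A_Qk)
  also have "\<dots> = M * minv M * (A * Qk)" using assoc_mult_mat[of M m m "minv M" m "A * Qk" k]
    by (simp add: mult_carrier_mat[OF A_carrier colsmat_carrier])
  also have "\<dots> = A * Qk" by simp
  finally show ?thesis ..
qed

lemma q_N_normalized:
  assumes "1 \<le> j" "j \<le> k"
  shows "q j \<bullet> (N *\<^sub>v q j) = 1"
proof (cases "j = 1")
  case True
  define x where "x = minv N *\<^sub>v b"
  have x: "x \<in> carrier_vec n" unfolding x_def by (auto intro: carrier_vecI)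
  have Nx: "N *\<^sub>v x = b"
    using assoc_mult_mat_vec[of N n n "minv N" n b] b_carrier unfolding x_def by simp
  then have "x \<noteq> 0\<^sub>v n" using b_nonzero b_carrier by auto
  then have nz: "Gnorm N x \<noteq> 0" by (rule pos_def_Gnorm_nonzero[OF N_pos_def x])
  (* q_1 is normalised like q_(j+1): the N^-1-norm of b is the N-norm of N^-1 b. *)
  have "\<beta> 1 = Gnorm N x"
    unfolding beta_1 Gnorm_def Nx using comm_scalar_prod[OF b_carrier x] unfolding x_def by simp
  then show ?thesis using Gnorm_normalized[OF N_pos_def x nz] unfolding True q_1 x_def by simp
next
  case False
  then have i: "1 \<le> j - 1" "j - 1 < k" using assms by auto
  then show ?thesis
    using Gnorm_normalized[OF N_pos_def g_carrier beta_Suc_nonzero[OF i, unfolded beta_Suc_eq[OF i]]]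
      q_Suc_eq[OF i] beta_Suc_eq[OF i] False by simp
qed

lemma g_N_orthogonal:
  assumes j: "1 \<le> j" "j \<le> k" and orth: "(colsmat n q j)\<^sup>T * N * colsmat n q j = 1\<^sub>m j"
  shows "(colsmat n q j)\<^sup>T *\<^sub>v (N *\<^sub>v g j) = 0\<^sub>v j"
  unfolding g_eq[OF j] h_eq[OF j]
  by (rule Gram_Schmidt_residual_orthogonal[OF N_carrier colsmat_carrier orth]) (auto intro: carrier_vecI)

lemma q_orthonormal:
  assumes "j \<le> k" "1 \<le> a" "a \<le> j" "1 \<le> c" "c \<le> j"
  shows "q a \<bullet> (N *\<^sub>v q c) = (if a = c then 1 else 0)"
  using assms
proof (induction j arbitrary: a c)
  case 0
  then show ?case by simp
next
  case (Suc j)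
  have new: "q a \<bullet> (N *\<^sub>v q (j + 1)) = 0" if a: "1 \<le> a" "a \<le> j" for a
  proof -
    have j: "1 \<le> j" "j < k" using a Suc.prems by auto
    have "(colsmat n q j)\<^sup>T * N * colsmat n q j = 1\<^sub>m j"
      using Suc.IH j by (intro colsmat_Gram_eq_one) auto
    then have "(colsmat n q j)\<^sup>T *\<^sub>v (N *\<^sub>v g j) = 0\<^sub>v j"
      by (rule g_N_orthogonal[OF j(1) less_imp_le[OF j(2)]])
    then have "q a \<bullet> (N *\<^sub>v g j) = 0"
      using colsmat_transpose_mult_vec_index[of "a - 1" j q n "N *\<^sub>v g j"] a j
      by (simp add: mult_mat_vec_carrier[OF N_carrier])
    then show ?thesis using q_Suc_eq[OF j] a j by (simp add: mult_mat_vec[OF N_carrier g_carrier])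
  qed
  consider "a \<le> j" "c \<le> j" | "a = j + 1" "c = j + 1" | "a \<le> j" "c = j + 1" | "a = j + 1" "c \<le> j"
    using Suc.prems by linarith
  then show ?case
  proof cases
    case 1
    then show ?thesis using Suc by simp
  next
    case 2
    then show ?thesis using q_N_normalized Suc.prems by simp
  next
    case 3
    then show ?thesis using new Suc.prems by simp
  next
    case 4
    then show ?thesis
      using new[of c] symmetric_bilinear_commute[OF N_carrier N_symmetric, of "q a" "q c"] Suc.prems
      by simp
  qed
qed

lemma Qk_orthonormal: "Qk\<^sup>T * N * Qk = 1\<^sub>m k"
  using q_orthonormal[OF order.refl] by (intro colsmat_Gram_eq_one) simp_all

lemma Qk_transpose_N_g: "Qk\<^sup>T *\<^sub>v (N *\<^sub>v g k) = 0\<^sub>v k"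
  by (rule g_N_orthogonal[OF k_pos order.refl Qk_orthonormal])

lemma N_mult_minv_N_vec: "y \<in> carrier_vec n \<Longrightarrow> N *\<^sub>v (minv N *\<^sub>v y) = y"
  using assoc_mult_mat_vec[of N n n "minv N" n y] by simp

lemma minv_N_mult_N: "dim_row X = n \<Longrightarrow> minv N * (N * X) = X"
  using assoc_mult_mat[of "minv N" n n N n X "dim_col X"] by (auto intro: carrier_matI)

lemma Gk_eq_colsmat: "Gk = colsmat n (\<lambda>j. if j = k then g k else 0\<^sub>v n) k"
  using outer_unit_vec_eq_colsmat g_carrier[OF k_pos order.refl] .

lemma Qk_Hk_plus_Gk_eq_colsmat: "Qk * Hk + Gk = colsmat n (\<lambda>j. minv N *\<^sub>v (A\<^sup>T *\<^sub>v v j + t j)) k"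
proof (rule colsmat_eqI)
  fix i assume i: "i < k"
  then have j: "1 \<le> i + 1" "i + 1 \<le> k" by auto
  let ?P = "colsmat n q (i + 1) *\<^sub>v h (i + 1)"
  let ?E = "if i + 1 < k then \<beta> (i + 2) \<cdot>\<^sub>v q (i + 2) else 0\<^sub>v n"
  have "col (Qk * Hk + Gk) i = col (Qk * Hk) i + col Gk i"
    using i by (intro col_add) auto
  also have "\<dots> = ?P + ?E + (if i + 1 = k then g k else 0\<^sub>v n)"
    using col_colsmat_mult_Hmat[of k q n i h \<beta>] i unfolding Gk_eq_colsmat by (simp add: col_colsmat)
  also have "\<dots> = ?P + g (i + 1)"
  proof (cases "i + 1 < k")
    case True
    then have "\<beta> (i + 2) \<cdot>\<^sub>v q (i + 2) = g (i + 1)"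
      using q_Suc_eq[of "i + 1"] beta_Suc_nonzero[of "i + 1"] by (intro eq_vecI) auto
    then show ?thesis using True by (intro eq_vecI) auto
  next
    case False
    then have k: "k = i + 1" using i by simp
    show ?thesis using i k by (intro eq_vecI) auto
  qed
  also have "\<dots> = minv N *\<^sub>v (A\<^sup>T *\<^sub>v v (i + 1) + t (i + 1))"
    using i unfolding g_eq[OF j] by (intro eq_vecI) auto
  finally show "col (Qk * Hk + Gk) i = minv N *\<^sub>v (A\<^sup>T *\<^sub>v v (i + 1) + t (i + 1))" .
qed simp

lemma AVT_eq_N_Qk_Hk_plus_Gk: "A\<^sup>T * Vk + Tk = N * (Qk * Hk + Gk)"
proof -
  have "N * (Qk * Hk + Gk) = colsmat n (\<lambda>j. N *\<^sub>v (minv N *\<^sub>v (A\<^sup>T *\<^sub>v v j + t j))) k"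
    unfolding Qk_Hk_plus_Gk_eq_colsmat by (rule mult_colsmat) (auto intro: carrier_vecI)
  also have "\<dots> = colsmat n (\<lambda>j. A\<^sup>T *\<^sub>v v j + t j) k"
    by (rule colsmat_cong) (auto intro!: N_mult_minv_N_vec carrier_vecI)
  also have "\<dots> = colsmat n (\<lambda>j. A\<^sup>T *\<^sub>v v j) k + Tk"
    by (rule add_colsmat[symmetric]) (auto intro: carrier_vecI)
  also have "colsmat n (\<lambda>j. A\<^sup>T *\<^sub>v v j) k = A\<^sup>T * Vk"
    by (rule mult_colsmat[symmetric]) auto
  finally show ?thesis ..
qed

lemma Arnoldi_relation: "A\<^sup>T * Vk + Tk = N * Qk * Hk + N * Gk"
  unfolding AVT_eq_N_Qk_Hk_plus_Gk by (simp add: mat_algebra_dims)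

lemma Qk_transpose_N_Gk: "Qk\<^sup>T * N * Gk = 0\<^sub>m k k"
proof -
  have "Qk\<^sup>T * N * Gk = colsmat k (\<lambda>j. (Qk\<^sup>T * N) *\<^sub>v (if j = k then g k else 0\<^sub>v n)) k"
    unfolding Gk_eq_colsmat by (rule mult_colsmat) auto
  also have "\<dots> = colsmat k (\<lambda>j. 0\<^sub>v k) k"
  proof (rule colsmat_cong)
    fix j
    have "(Qk\<^sup>T * N) *\<^sub>v g k = 0\<^sub>v k"
      using assoc_mult_mat_vec[of "Qk\<^sup>T" k n N n "g k"] Qk_transpose_N_g k_pos by simp
    then show "(Qk\<^sup>T * N) *\<^sub>v (if j = k then g k else 0\<^sub>v n) = 0\<^sub>v k"
      by (simp add: mult_mat_vec_zero)
  qed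
  finally show ?thesis unfolding colsmat_zero .
qed

lemma Hk_eq_Qk_transpose_AVT: "Hk = Qk\<^sup>T * (A\<^sup>T * Vk + Tk)"
proof -
  have "Qk\<^sup>T * (A\<^sup>T * Vk + Tk) = Qk\<^sup>T * N * Qk * Hk + Qk\<^sup>T * N * Gk"
    unfolding AVT_eq_N_Qk_Hk_plus_Gk by (simp add: mat_algebra_dims)
  also have "\<dots> = Hk"
    unfolding Qk_orthonormal Qk_transpose_N_Gk by simp
  finally show ?thesis ..
qed

lemma Tk_transpose_Dk_symmetric: "Tk\<^sup>T * Dk = Dk\<^sup>T * Tk"
  using C_symmetric by (simp add: C_Dk_eq_Tk[symmetric] mat_algebra_dims)

lemma Hk_factorization: "Hk = Bk\<^sup>T * Lk\<^sup>T"
proof -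
  have "Qk\<^sup>T * (A\<^sup>T * Vk) = (A * Qk)\<^sup>T * Vk" by (simp add: mat_algebra_dims)
  also have "\<dots> = Bk\<^sup>T * (Vk\<^sup>T * M\<^sup>T * Vk)" unfolding A_Qk_eq_M_Vk_Bk by (simp add: mat_algebra_dims)
  finally have AV: "Qk\<^sup>T * (A\<^sup>T * Vk) = Bk\<^sup>T * (Vk\<^sup>T * M\<^sup>T * Vk)" .
  have DT: "Qk\<^sup>T * Tk = Bk\<^sup>T * (Dk\<^sup>T * Tk)"
    by (subst Qk_eq_Dk_Bk) (simp add: mat_algebra_dims)
  have "Hk = Qk\<^sup>T * (A\<^sup>T * Vk) + Qk\<^sup>T * Tk"
    unfolding Hk_eq_Qk_transpose_AVT by (simp add: mat_algebra_dims)
  also have "\<dots> = Bk\<^sup>T * Lk\<^sup>T"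
    unfolding AV DT using Tk_transpose_Dk_symmetric by (simp add: mat_algebra_dims)
  finally show ?thesis .
qed

lemma Lk_index:
  assumes "a < k" "c < k"
  shows "Lk $$ (a, c) = v (a + 1) \<bullet> (M *\<^sub>v v (c + 1)) + ((1 / \<alpha> (a + 1)) \<cdot>\<^sub>v r (a + 1)) \<bullet> t (c + 1)"
proof -
  have "Vk\<^sup>T * M * Vk = Vk\<^sup>T * colsmat m (\<lambda>j. M *\<^sub>v v j) k"
    by (simp add: mat_algebra_dims mult_colsmat[OF M_carrier])
  then show ?thesis
    using assms colsmat_transpose_mult_index[of a k c k v m "\<lambda>j. M *\<^sub>v v j"]
      colsmat_transpose_mult_index[of a k c k "\<lambda>j. (1 / \<alpha> j) \<cdot>\<^sub>v r j" n t]
    by (simp add: mult_mat_vec_carrier[OF M_carrier])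
qed

lemma Lk_diagonal:
  assumes "i < k"
  shows "Lk $$ (i, i) = 1"
proof -
  define j where "j = i + 1"
  have j: "1 \<le> j" "j \<le> k" using assms unfolding j_def by auto
  have "Lk $$ (i, i) = v j \<bullet> (M *\<^sub>v v j) + ((1 / \<alpha> j) \<cdot>\<^sub>v r j) \<bullet> t j"
    using Lk_index[OF assms assms] unfolding j_def .
  also have "\<dots> = (w j \<bullet> (M *\<^sub>v w j) + r j \<bullet> s j) / (\<alpha> j)\<^sup>2"
    unfolding v_eq[OF j] t_eq[OF j] using j
    by (simp add: mult_mat_vec[OF M_carrier w_carrier[OF j]] power2_eq_square add_divide_distrib)
  also have "\<dots> = 1" using alpha_squared[OF j, symmetric] alpha_nonzero[OF j] by simp
  finally show ?thesis .
qed

lemma Lk_unit_lower_triangular: "unit_lower_triangular k Lk"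
  unfolding unit_lower_triangular_def
proof (intro conjI allI impI)
  show Lk: "Lk \<in> carrier_mat k k" by (rule carrier_matI) simp_all
  show "Lk $$ (i, i) = 1" if "i < k" for i using Lk_diagonal[OF that] .
  have diag: "Lk\<^sup>T $$ (a, a) = 1" if "a < k" for a
    using Lk_diagonal[OF that] Lk that by simp
  fix i j assume ij: "i < j \<and> j < k"
  have "Lk\<^sup>T $$ (j, i) = 0"
    by (rule Bmat_transpose_factor_upper_triangular[OF _ Hk_factorization alpha_nonzero diag])
      (use Lk ij in auto)
  then show "Lk $$ (i, j) = 0" using ij by simp
qed

lemma preconditioned_Schur_Arnoldi:
  "minv N * (A\<^sup>T * minv M * A + C) * Qk = Qk * (Hk * Bk) + \<alpha> k \<cdot>\<^sub>m Gk"
proof -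
  have "(A\<^sup>T * minv M * A + C) * Qk = A\<^sup>T * (minv M * (A * Qk)) + C * Qk"
    by (simp add: mat_algebra_dims)
  also have "\<dots> = (A\<^sup>T * Vk + Tk) * Bk"
    by (simp add: Vk_Bk_eq_minv_M_A_Qk[symmetric] C_Qk_eq_Tk_Bk mat_algebra_dims)
  finally have SQ: "(A\<^sup>T * minv M * A + C) * Qk = N * (Qk * Hk + Gk) * Bk"
    unfolding AVT_eq_N_Qk_Hk_plus_Gk .
  have "minv N * (A\<^sup>T * minv M * A + C) * Qk = minv N * ((A\<^sup>T * minv M * A + C) * Qk)"
    by (rule assoc_mult_mat_dims) simp_all
  also have "\<dots> = Qk * (Hk * Bk) + Gk * Bk"
    unfolding SQ by (simp add: mat_algebra_dims minv_N_mult_N)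
  finally show ?thesis
    unfolding outer_unit_vec_mult_Bmat[OF g_carrier[OF k_pos order.refl] k_pos] .
qed

end

theorem mainTheorem7:
  fixes m n k :: nat
    and M A C N :: "real mat" and b :: "real vec"
    and q w r s v t h g :: "nat \<Rightarrow> real vec" and \<alpha> \<beta> :: "nat \<Rightarrow> real"
  assumes "pos_def m M"
    and "A \<in> carrier_mat m n" and "n \<le> m" and "vec_space.rank m A = n"
    and "pos_semidef n C" and "C\<^sup>T = C"
    and "b \<in> carrier_vec n" and "b \<noteq> 0\<^sub>v n"
    and "pos_def n N" and "N\<^sup>T = N"
    and "1 \<le> k"
    and "nsCRAIG_upto m n M A C N b k q w r s \<alpha> v t h g \<beta>"
  shows
    "let Qk = colsmat n q k; Vk = colsmat m v k; Tk = colsmat n t k;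
         Dk = colsmat n (\<lambda>j. (1 / \<alpha> j) \<cdot>\<^sub>v r j) k;
         Bk = Bmat \<alpha> \<beta> k; Hk = Hmat h \<beta> k;
         Lk = Vk\<^sup>T * M * Vk + Dk\<^sup>T * Tk;
         ek = unit_vec k (k - 1);
         S = A\<^sup>T * minv M * A + C
     in Qk = Dk * Bk \<and>
        A * Qk = M * Vk * Bk \<and>
        C * Qk = Tk * Bk \<and>
        Qk\<^sup>T * N * Qk = 1\<^sub>m k \<and>
        A\<^sup>T * Vk + Tk = N * Qk * Hk + N * (mat_of_cols n [g k] * mat_of_rows k [ek]) \<and>
        Hk = Bk\<^sup>T * Lk\<^sup>T \<and>
        unit_lower_triangular k Lk \<and>
        minv N * S * Qk = Qk * (Hk * Bk) + \<alpha> k \<cdot>\<^sub>m (mat_of_cols n [g k] * mat_of_rows k [ek])"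
proof -
  interpret nsCRAIG m n k M A C N b q w r s v t h g \<alpha> \<beta>
    using assms(1,2,5-12) by (simp add: nsCRAIG_def)
  show ?thesis
    unfolding Let_def
    using Qk_eq_Dk_Bk A_Qk_eq_M_Vk_Bk C_Qk_eq_Tk_Bk Qk_orthonormal Arnoldi_relation Hk_factorization
      Lk_unit_lower_triangular preconditioned_Schur_Arnoldi
    by blast
qed

end
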